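(* Let $\Sigma$ be a ranked alphabet, $B$ a strong bimonoid and $\mathcal{A}=(Q,\delta,F)$ a $(\Sigma,B)$-wta. If $\mathcal{A}$ has the finite order property, then $[\![\mathcal{R}(\mathcal{A})]\!]^{\mathrm{run}}=[\![\mathcal{A}]\!]^{\mathrm{run}}$.
   Context: Ranked alphabet $\Sigma$ ($\Sigma^{(0)}\ne\emptyset$), trees $T_\Sigma$, positions $\mathrm{pos}(\xi)$ ($\mathrm{pos}(\sigma(\xi_1,\dots,\xi_k))=\{\varepsilon\}\cup\{iv\mid v\in\mathrm{pos}(\xi_i)\}$); strong bimonoid $(B,\oplus,\otimes,\mathbb{0},\mathbb{1})$ (commutative monoid $(B,\oplus,\mathbb{0})$, monoid $(B,\otimes,\mathbb{1})$, $\mathbb{0}\ne\mathbb{1}$, $\mathbb{0}$ absorbing, no distributivity). For $b\in B$, $nb$ is the $n$-fold sum ($0b=\mathbb{0}$); $b$ has finite order if $\{nb\mid n\in\mathbb{N}\}$ is finite; then index $i(b)$ is the least $i\ge1$ with $ib=(i+k)b$ for some $k\ge1$, period $p(b)$ the least $p\ge1$ with $i(b)b=(i(b)+p)b$. $(\Sigma,B)$-wta $\mathcal{A}=(Q,\delta,F)$: $Q$ finite nonempty, $\delta_k:Q^k\times\Sigma^{(k)}\times Q\to B$, $F:Q\to B$. Runs: maps $\rho:\mathrm{pos}(\xi)\to Q$ ($R_{\mathcal{A}}(\xi)$; $q$-runs $R_{\mathcal{A}}(q,\xi)$ those with $\rho(\varepsilon)=q$); $\rho|_i(w)=\rho(iw)$;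 $\mathrm{wt}_{\mathcal{A}}(\rho)=\big(\bigotimes_{i=1}^k\mathrm{wt}_{\mathcal{A}}(\rho|_i)\big)\otimes\delta_k(\rho(1)\dots\rho(k),\sigma,\rho(\varepsilon))$; $[\![\mathcal{A}]\!]^{\mathrm{run}}(\xi)=\bigoplus_{\rho\in R_{\mathcal{A}}(\xi)}\mathrm{wt}_{\mathcal{A}}(\rho)\otimes F_{\rho(\varepsilon)}$. $H_{\mathcal{A}}$ is the smallest subset of $B$ containing $\bigcup_k\mathrm{im}(\delta_k)$ and closed under $\otimes$. $\mathcal{A}$ has the finite order property if $H_{\mathcal{A}}$ is finite and every element of $H_{\mathcal{A}}\otimes\mathrm{im}(F)=\{a\otimes c\mid a\in H_{\mathcal{A}},c\in\mathrm{im}(F)\}$ has finite order in $(B,\oplus,\mathbb{0})$. Then let $i_{\mathcal{A}}=\max\{i(b)\mid b\in H_{\mathcal{A}}\otimes\mathrm{im}(F)\}$, $p_{\mathcal{A}}=\mathrm{lcm}\{p(b)\mid b\in H_{\mathcal{A}}\otimes\mathrm{im}(F)\}$, $J_{\mathcal{A}}(n)=n$ if $n<i_{\mathcal{A}}$ and $J_{\mathcal{A}}(n)=i_{\mathcal{A}}+((n-i_{\mathcal{A}})\bmod p_{\mathcal{A}})$ otherwise. For $\xi\in T_\Sigma$ and $(q,b)\in Q\times H_{\mathcal{A}}$ let $p_\xi(q,b)=|\{\rho\in R_{\mathcal{A}}(q,\xi)\mid\mathrm{wt}_{\mathcal{A}}(\rho)=b\}|$ and $\pi_\xi(q,b)=J_{\mathcal{A}}(p_\xi(q,b))$,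 so $\pi_\xi:Q\times H_{\mathcal{A}}\to[0,i_{\mathcal{A}}+p_{\mathcal{A}}-1]$. $\mathcal{R}(\mathcal{A})=(Q_{\mathcal{R}},\delta_{\mathcal{R}},F_{\mathcal{R}})$ is the wta with $Q_{\mathcal{R}}=\{\pi_\xi\mid\xi\in T_\Sigma\}$ (a finite set); $(\delta_{\mathcal{R}})_k(\pi_{\xi_1}\dots\pi_{\xi_k},\sigma,\pi)=\mathbb{1}$ if $\pi=\pi_{\sigma(\xi_1,\dots,\xi_k)}$ and $\mathbb{0}$ otherwise (this depends only on $\pi_{\xi_1},\dots,\pi_{\xi_k}$, not on the chosen $\xi_i$); $(F_{\mathcal{R}})_{\pi_\xi}=\bigoplus_{(q,b)\in Q\times H_{\mathcal{A}}}\pi_\xi(q,b)(b\otimes F_q)$. *)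

theory Defs
  imports Main "HOL-Library.FuncSet"
begin

class strong_bimonoid = comm_monoid_add + monoid_mult + mult_zero + zero_neq_one

primrec natmul :: "nat \<Rightarrow> 'b::comm_monoid_add \<Rightarrow> 'b" where
  "natmul 0 b = 0"
| "natmul (Suc n) b = natmul n b + b"

definition finite_order :: "'b::comm_monoid_add \<Rightarrow> bool" where
  "finite_order b \<longleftrightarrow> finite {natmul n b | n. True}"

definition ord_index :: "'b::comm_monoid_add \<Rightarrow> nat" where
  "ord_index b = (LEAST i. 1 \<le> i \<and> (\<exists>k\<ge>1. natmul i b = natmul (i + k) b))"

definition ord_period :: "'b::comm_monoid_add \<Rightarrow> nat" where
  "ord_period b = (LEAST p. 1 \<le> p \<and> natmul (ord_index b) b = natmul (ord_index b + p) b)"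

datatype 'f tree = Node 'f "'f tree list"

definition ranked_alphabet :: "'f set \<Rightarrow> ('f \<Rightarrow> nat) \<Rightarrow> bool" where
  "ranked_alphabet Sig rk \<longleftrightarrow> finite Sig \<and> (\<exists>f\<in>Sig. rk f = 0)"

fun wf_tree :: "'f set \<Rightarrow> ('f \<Rightarrow> nat) \<Rightarrow> 'f tree \<Rightarrow> bool" where
  "wf_tree Sig rk (Node f ts) \<longleftrightarrow> f \<in> Sig \<and> length ts = rk f \<and> (\<forall>t\<in>set ts. wf_tree Sig rk t)"

definition trees :: "'f set \<Rightarrow> ('f \<Rightarrow> nat) \<Rightarrow> 'f tree set" where
  "trees Sig rk = {t. wf_tree Sig rk t}"

lemma size_in_lt: "b \<in> set ts \<Longrightarrow> size b < Suc (size_list size ts)"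
  by (induction ts) auto

text \<open>Positions; children are numbered from 0 (the paper numbers them from 1).\<close>
function pos :: "'f tree \<Rightarrow> nat list set" where
  "pos (Node f ts) = insert [] (\<Union>(i, t)\<in>set (zip [0..<length ts] ts). (\<lambda>v. i # v) ` pos t)"
  by pat_completeness auto
termination
  by (relation "measure size") (auto dest!: set_zip_rightD intro: size_in_lt)

text \<open>A wta is given by a state set Q, a transition function \<delta> (where \<delta> qs f q with
  length qs = rk f is the value \<delta>_k(qs, f, q)) and a root weight F.\<close>
definition wta :: "'q set \<Rightarrow> bool" where
  "wta Q \<longleftrightarrow> finite Q \<and> Q \<noteq> {}"

definition runs :: "'q set \<Rightarrow> 'f tree \<Rightarrow> (nat list \<Rightarrow> 'q) set" where
  "runs Q \<xi> = pos \<xi> \<rightarrow>\<^sub>E Q"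

definition qruns :: "'q set \<Rightarrow> 'q \<Rightarrow> 'f tree \<Rightarrow> (nat list \<Rightarrow> 'q) set" where
  "qruns Q q \<xi> = {\<rho> \<in> runs Q \<xi>. \<rho> [] = q}"

function wt :: "('q list \<Rightarrow> 'f \<Rightarrow> 'q \<Rightarrow> 'b::monoid_mult) \<Rightarrow> (nat list \<Rightarrow> 'q) \<Rightarrow> 'f tree \<Rightarrow> 'b" where
  "wt \<delta> \<rho> (Node f ts) =
     prod_list (map (\<lambda>(i, t). wt \<delta> (\<lambda>w. \<rho> (i # w)) t) (zip [0..<length ts] ts))
     * \<delta> (map (\<lambda>i. \<rho> [i]) [0..<length ts]) f (\<rho> [])"
  by pat_completeness auto
termination
  by (relation "measure (\<lambda>(_, _, t). size t)")
     (auto dest!: set_zip_rightD intro: size_in_lt)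

definition run_sem :: "'q set \<Rightarrow> ('q list \<Rightarrow> 'f \<Rightarrow> 'q \<Rightarrow> 'b::strong_bimonoid) \<Rightarrow> ('q \<Rightarrow> 'b) \<Rightarrow> 'f tree \<Rightarrow> 'b" where
  "run_sem Q \<delta> F \<xi> = (\<Sum>\<rho>\<in>runs Q \<xi>. wt \<delta> \<rho> \<xi> * F (\<rho> []))"

definition delta_image :: "'f set \<Rightarrow> ('f \<Rightarrow> nat) \<Rightarrow> 'q set \<Rightarrow> ('q list \<Rightarrow> 'f \<Rightarrow> 'q \<Rightarrow> 'b) \<Rightarrow> 'b set" where
  "delta_image Sig rk Q \<delta> = {\<delta> qs f q | qs f q. f \<in> Sig \<and> set qs \<subseteq> Q \<and> length qs = rk f \<and> q \<in> Q}"

inductive_set Hset :: "'f set \<Rightarrow> ('f \<Rightarrow> nat) \<Rightarrow> 'q set \<Rightarrow> ('q list \<Rightarrow> 'f \<Rightarrow> 'q \<Rightarrow> 'b::monoid_mult) \<Rightarrow> 'b set"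
  for Sig rk Q \<delta> where
  base: "b \<in> delta_image Sig rk Q \<delta> \<Longrightarrow> b \<in> Hset Sig rk Q \<delta>"
| mult: "a \<in> Hset Sig rk Q \<delta> \<Longrightarrow> b \<in> Hset Sig rk Q \<delta> \<Longrightarrow> a * b \<in> Hset Sig rk Q \<delta>"

definition HF :: "'f set \<Rightarrow> ('f \<Rightarrow> nat) \<Rightarrow> 'q set \<Rightarrow> ('q list \<Rightarrow> 'f \<Rightarrow> 'q \<Rightarrow> 'b::monoid_mult) \<Rightarrow> ('q \<Rightarrow> 'b) \<Rightarrow> 'b set" where
  "HF Sig rk Q \<delta> F = {a * c | a c. a \<in> Hset Sig rk Q \<delta> \<and> c \<in> F ` Q}"

definition finite_order_property :: "'f set \<Rightarrow> ('f \<Rightarrow> nat) \<Rightarrow> 'q set \<Rightarrow> ('q list \<Rightarrow> 'f \<Rightarrow> 'q \<Rightarrow> 'b::strong_bimonoid) \<Rightarrow> ('q \<Rightarrow> 'b) \<Rightarrow> bool" where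
  "finite_order_property Sig rk Q \<delta> F \<longleftrightarrow>
     finite (Hset Sig rk Q \<delta>) \<and> (\<forall>b\<in>HF Sig rk Q \<delta> F. finite_order b)"

definition iA :: "'f set \<Rightarrow> ('f \<Rightarrow> nat) \<Rightarrow> 'q set \<Rightarrow> ('q list \<Rightarrow> 'f \<Rightarrow> 'q \<Rightarrow> 'b::strong_bimonoid) \<Rightarrow> ('q \<Rightarrow> 'b) \<Rightarrow> nat" where
  "iA Sig rk Q \<delta> F = Max (ord_index ` HF Sig rk Q \<delta> F)"

definition pA :: "'f set \<Rightarrow> ('f \<Rightarrow> nat) \<Rightarrow> 'q set \<Rightarrow> ('q list \<Rightarrow> 'f \<Rightarrow> 'q \<Rightarrow> 'b::strong_bimonoid) \<Rightarrow> ('q \<Rightarrow> 'b) \<Rightarrow> nat" where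
  "pA Sig rk Q \<delta> F = Lcm (ord_period ` HF Sig rk Q \<delta> F)"

definition JA :: "'f set \<Rightarrow> ('f \<Rightarrow> nat) \<Rightarrow> 'q set \<Rightarrow> ('q list \<Rightarrow> 'f \<Rightarrow> 'q \<Rightarrow> 'b::strong_bimonoid) \<Rightarrow> ('q \<Rightarrow> 'b) \<Rightarrow> nat \<Rightarrow> nat" where
  "JA Sig rk Q \<delta> F n =
     (if n < iA Sig rk Q \<delta> F then n
      else iA Sig rk Q \<delta> F + (n - iA Sig rk Q \<delta> F) mod pA Sig rk Q \<delta> F)"

definition pcount :: "'q set \<Rightarrow> ('q list \<Rightarrow> 'f \<Rightarrow> 'q \<Rightarrow> 'b::monoid_mult) \<Rightarrow> 'f tree \<Rightarrow> 'q \<times> 'b \<Rightarrow> nat" where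
  "pcount Q \<delta> \<xi> qb = card {\<rho> \<in> qruns Q (fst qb) \<xi>. wt \<delta> \<rho> \<xi> = snd qb}"

text \<open>\<pi>_\<xi> : Q \<times> H_A \<rightarrow> nat, extended by 0 outside Q \<times> H_A (canonical representative).\<close>
definition piA :: "'f set \<Rightarrow> ('f \<Rightarrow> nat) \<Rightarrow> 'q set \<Rightarrow> ('q list \<Rightarrow> 'f \<Rightarrow> 'q \<Rightarrow> 'b::strong_bimonoid) \<Rightarrow> ('q \<Rightarrow> 'b) \<Rightarrow> 'f tree \<Rightarrow> 'q \<times> 'b \<Rightarrow> nat" where
  "piA Sig rk Q \<delta> F \<xi> qb =
     (if qb \<in> Q \<times> Hset Sig rk Q \<delta> then JA Sig rk Q \<delta> F (pcount Q \<delta> \<xi> qb) else 0)"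

definition QR :: "'f set \<Rightarrow> ('f \<Rightarrow> nat) \<Rightarrow> 'q set \<Rightarrow> ('q list \<Rightarrow> 'f \<Rightarrow> 'q \<Rightarrow> 'b::strong_bimonoid) \<Rightarrow> ('q \<Rightarrow> 'b) \<Rightarrow> ('q \<times> 'b \<Rightarrow> nat) set" where
  "QR Sig rk Q \<delta> F = piA Sig rk Q \<delta> F ` trees Sig rk"

definition deltaR :: "'f set \<Rightarrow> ('f \<Rightarrow> nat) \<Rightarrow> 'q set \<Rightarrow> ('q list \<Rightarrow> 'f \<Rightarrow> 'q \<Rightarrow> 'b::strong_bimonoid) \<Rightarrow> ('q \<Rightarrow> 'b)
    \<Rightarrow> ('q \<times> 'b \<Rightarrow> nat) list \<Rightarrow> 'f \<Rightarrow> ('q \<times> 'b \<Rightarrow> nat) \<Rightarrow> 'b" where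
  "deltaR Sig rk Q \<delta> F \<pi>s f \<pi> =
     (if \<pi> = piA Sig rk Q \<delta> F
              (Node f (map (\<lambda>\<pi>'. SOME \<xi>. \<xi> \<in> trees Sig rk \<and> piA Sig rk Q \<delta> F \<xi> = \<pi>') \<pi>s))
      then 1 else 0)"

definition FR :: "'f set \<Rightarrow> ('f \<Rightarrow> nat) \<Rightarrow> 'q set \<Rightarrow> ('q list \<Rightarrow> 'f \<Rightarrow> 'q \<Rightarrow> 'b::strong_bimonoid) \<Rightarrow> ('q \<Rightarrow> 'b)
    \<Rightarrow> ('q \<times> 'b \<Rightarrow> nat) \<Rightarrow> 'b" where
  "FR Sig rk Q \<delta> F \<pi> = (\<Sum>(q, b)\<in>Q \<times> Hset Sig rk Q \<delta>. natmul (\<pi> (q, b)) (b * F q))"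

end

theory Submission
  imports Defs
begin

text \<open>Grouping the runs of \<A> on \<xi> by root state q and weight b gives
  [[\<A>]](\<xi>) = sum over (q,b) of p_\<xi>(q,b) (b \<otimes> F_q), and n c = J_\<A>(n) c for every c in
  H_\<A> \<otimes> im F, because the multiples of c are periodic from i(c) \<le> i_\<A> on, with period p(c)
  dividing p_\<A>. Hence [[\<A>]](\<xi>) = F_R(\<pi>_\<xi>).

  J_\<A> is a congruence of the semiring of natural numbers, and p_{\<sigma>(\<xi>_1,...,\<xi>_k)}(q,b) is a sum
  of products of numbers p_{\<xi>_i}(q',b'). So \<pi>_{\<sigma>(\<xi>_1,...,\<xi>_k)} is determined by
  \<pi>_{\<xi>_1}, ..., \<pi>_{\<xi>_k}, \<delta>_R is a deterministic transition function, and the only run of R(\<A>)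
  on \<xi> with nonzero weight labels each position w by \<pi> of the subtree at w and has weight 1.
  Hence also [[R(\<A>)]](\<xi>) = F_R(\<pi>_\<xi>).\<close>

section \<open>Multiples in a commutative monoid\<close>

lemma natmul_add: "natmul (m + n) b = natmul m b + natmul n b"
  by (induction n) (simp_all add: add.assoc)

lemma natmul_nat [simp]: "natmul n c = n * (c::nat)"
  by (induction n) simp_all

lemma sum_const_natmul: "finite S \<Longrightarrow> (\<Sum>_\<in>S. c) = natmul (card S) c"
  by (induction S rule: finite_induct) (simp_all add: add.commute)

lemma sum_comp_natmul_card_fibres:
  fixes h :: "'x \<Rightarrow> 'b::comm_monoid_add"
  assumes "finite S" "finite X" "g ` S \<subseteq> X"
  shows "(\<Sum>a\<in>S. h (g a)) = (\<Sum>x\<in>X. natmul (card {a\<in>S. g a = x}) (h x))"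
proof -
  have "(\<Sum>a\<in>S. h (g a)) = (\<Sum>x\<in>X. \<Sum>a\<in>{a\<in>S. g a = x}. h (g a))"
    using sum.group[OF assms, of "\<lambda>a. h (g a)"] by simp
  also have "\<dots> = (\<Sum>x\<in>X. \<Sum>a\<in>{a\<in>S. g a = x}. h x)"
    by (rule sum.cong) auto
  also have "\<dots> = (\<Sum>x\<in>X. natmul (card {a\<in>S. g a = x}) (h x))"
    using assms(1) by (intro sum.cong refl sum_const_natmul) auto
  finally show ?thesis .
qed

lemma finite_order_imp_repeat:
  assumes "finite_order c"
  shows "\<exists>i k. 1 \<le> i \<and> 1 \<le> k \<and> natmul i c = natmul (i + k) c"
proof -
  have "range (\<lambda>n. natmul (Suc n) c) \<subseteq> {natmul n c | n. True}"
    by blast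
  then have "finite (range (\<lambda>n. natmul (Suc n) c))"
    using assms unfolding finite_order_def by (rule finite_subset)
  then have "\<not> inj (\<lambda>n. natmul (Suc n) c)"
    using finite_imageD infinite_UNIV_nat by blast
  then obtain x y where "x \<noteq> y" "natmul (Suc x) c = natmul (Suc y) c"
    unfolding inj_def by blast
  then show ?thesis
  proof (cases "x < y")
    case True
    with \<open>natmul (Suc x) c = natmul (Suc y) c\<close> show ?thesis
      by (intro exI[of _ "Suc x"] exI[of _ "y - x"]) auto
  next
    case False
    with \<open>x \<noteq> y\<close> \<open>natmul (Suc x) c = natmul (Suc y) c\<close> show ?thesis
      by (intro exI[of _ "Suc y"] exI[of _ "x - y"]) auto
  qed
qed

lemma ord_period_spec:
  assumes "finite_order c"
  shows "1 \<le> ord_period c" "natmul (ord_index c + ord_period c) c = natmul (ord_index c) c"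
proof -
  obtain i k where ik: "1 \<le> i" "1 \<le> k" "natmul i c = natmul (i + k) c"
    using finite_order_imp_repeat[OF assms] by blast
  have "1 \<le> ord_index c \<and> (\<exists>k\<ge>1. natmul (ord_index c) c = natmul (ord_index c + k) c)"
    unfolding ord_index_def by (rule LeastI[of _ i]) (use ik in auto)
  then obtain k' where k': "1 \<le> k'" "natmul (ord_index c) c = natmul (ord_index c + k') c"
    by blast
  have "1 \<le> ord_period c \<and> natmul (ord_index c) c = natmul (ord_index c + ord_period c) c"
    unfolding ord_period_def by (rule LeastI[of _ k']) (use k' in auto)
  then show "1 \<le> ord_period c" "natmul (ord_index c + ord_period c) c = natmul (ord_index c) c"
    by simp_all
qed

lemma natmul_periodic:
  assumes "finite_order c" "ord_index c \<le> m"
  shows "natmul (m + t * ord_period c) c = natmul m c"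
proof (induction t)
  case (Suc t)
  let ?i = "ord_index c" and ?p = "ord_period c"
  have "natmul (m + Suc t * ?p) c = natmul ((?i + ?p) + (m - ?i + t * ?p)) c"
    using assms(2) by (intro arg_cong[where f = "\<lambda>n. natmul n c"]) simp
  also have "\<dots> = natmul (?i + ?p) c + natmul (m - ?i + t * ?p) c"
    by (rule natmul_add)
  also have "\<dots> = natmul ?i c + natmul (m - ?i + t * ?p) c"
    by (simp only: ord_period_spec(2)[OF assms(1)])
  also have "\<dots> = natmul (m + t * ?p) c"
    using assms(2) by (simp flip: natmul_add add: add.assoc)
  finally show ?case
    using Suc by simp
qed simp

section \<open>Reduction of counts to index and period\<close>

definition cyc_reduce :: "nat \<Rightarrow> nat \<Rightarrow> nat \<Rightarrow> nat" where
  "cyc_reduce i p n = (if n < i then n else i + (n - i) mod p)"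

lemma JA_eq_cyc_reduce: "JA Sig rk Q \<delta> F = cyc_reduce (iA Sig rk Q \<delta> F) (pA Sig rk Q \<delta> F)"
  unfolding JA_def cyc_reduce_def by auto

lemma cyc_reduce_less: "0 < p \<Longrightarrow> cyc_reduce i p n < i + p"
  unfolding cyc_reduce_def by auto

lemma natmul_cyc_reduce:
  assumes "finite_order c" "ord_index c \<le> i" "ord_period c dvd p"
  shows "natmul (cyc_reduce i p n) c = natmul n c"
proof (cases "n < i")
  case False
  obtain r where r: "p = ord_period c * r"
    using assms(3) ..
  have "n = (i + (n - i) mod p) + (n - i) div p * p"
    using False mod_div_mult_eq[of "n - i" p] by linarith
  also have "\<dots> = (i + (n - i) mod p) + ((n - i) div p * r) * ord_period c"
    by (simp add: r mult_ac)
  finally have "natmul n c = natmul (i + (n - i) mod p) c"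
    using natmul_periodic[OF assms(1)] assms(2) by (metis trans_le_add1)
  then show ?thesis
    using False by (simp add: cyc_reduce_def)
qed (simp add: cyc_reduce_def)

lemma mod_diff_eq_iff:
  fixes n m i p :: nat
  assumes "i \<le> n" "i \<le> m"
  shows "(n - i) mod p = (m - i) mod p \<longleftrightarrow> n mod p = m mod p"
proof (cases "m \<le> n")
  case True
  then show ?thesis
    using assms by (simp add: mod_eq_dvd_iff_nat)
next
  case False
  then show ?thesis
    using assms by (simp add: mod_eq_dvd_iff_nat eq_commute[of "n mod p"] eq_commute[of "(n - i) mod p"])
qed

lemma cyc_reduce_eq_iff:
  "cyc_reduce i p n = cyc_reduce i p m \<longleftrightarrow> n = m \<or> (i \<le> n \<and> i \<le> m \<and> n mod p = m mod p)"
proof (cases "n < i \<or> m < i")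
  case True
  then show ?thesis
    unfolding cyc_reduce_def by auto
next
  case False
  then show ?thesis
    unfolding cyc_reduce_def by (auto simp: mod_diff_eq_iff)
qed

lemma cyc_reduce_add_cong:
  assumes "cyc_reduce i p a = cyc_reduce i p a'"
  shows "cyc_reduce i p (a + b) = cyc_reduce i p (a' + b)"
proof -
  consider "a = a'" | "i \<le> a" "i \<le> a'" "a mod p = a' mod p"
    using assms unfolding cyc_reduce_eq_iff by blast
  then show ?thesis
  proof cases
    case 2
    then have "(a + b) mod p = (a' + b) mod p"
      by (intro mod_add_cong) auto
    with 2 show ?thesis
      unfolding cyc_reduce_eq_iff by simp
  qed simp
qed

lemma cyc_reduce_mult_cong:
  assumes "cyc_reduce i p a = cyc_reduce i p a'"
  shows "cyc_reduce i p (a * b) = cyc_reduce i p (a' * b)"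
proof -
  consider "a = a' \<or> b = 0" | "i \<le> a" "i \<le> a'" "a mod p = a' mod p" "b \<noteq> 0"
    using assms unfolding cyc_reduce_eq_iff by blast
  then show ?thesis
  proof cases
    case 2
    then have "i \<le> a * b" "i \<le> a' * b"
      by (simp_all add: order.trans[OF _ mult_le_mono2[of 1 b]])
    moreover have "(a * b) mod p = (a' * b) mod p"
      using 2 by (intro mod_mult_cong) auto
    ultimately show ?thesis
      unfolding cyc_reduce_eq_iff by simp
  qed auto
qed

section \<open>Counting tuples\<close>

lemma mem_listset_iff: "rs \<in> listset As \<longleftrightarrow> list_all2 (\<in>) rs As"
  by (induction As arbitrary: rs) (auto simp: set_Cons_def list_all2_Cons2)

lemma finite_listset: "\<forall>A\<in>set As. finite A \<Longrightarrow> finite (listset As)"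
proof (induction As)
  case (Cons A As)
  have "listset (A # As) = (\<lambda>(a, l). a # l) ` (A \<times> listset As)"
    by (auto simp: set_Cons_def)
  then show ?case
    using Cons by simp
qed simp

lemma card_listset_Cons_filter:
  assumes "finite A" "\<forall>A\<in>set As. finite A"
  shows "card {rs\<in>listset (A # As). P rs} = (\<Sum>a\<in>A. card {l\<in>listset As. P (a # l)})"
proof -
  have "{rs\<in>listset (A # As). P rs} = (\<lambda>(a, l). a # l) ` (SIGMA a:A. {l\<in>listset As. P (a # l)})"
    by (auto simp: set_Cons_def)
  moreover have "inj_on (\<lambda>(a, l). a # l) (SIGMA a:A. {l\<in>listset As. P (a # l)})"
    by (auto simp: inj_on_def)
  ultimately have "card {rs\<in>listset (A # As). P rs} = card (SIGMA a:A. {l\<in>listset As. P (a # l)})"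
    by (simp add: card_image)
  also have "\<dots> = (\<Sum>a\<in>A. card {l\<in>listset As. P (a # l)})"
    using assms finite_listset[OF assms(2)] by (intro card_SigmaI) auto
  finally show ?thesis .
qed

lemma congruence_sum_cong:
  fixes J :: "nat \<Rightarrow> nat"
  assumes add: "\<And>a a' b. J a = J a' \<Longrightarrow> J (a + b) = J (a' + b)"
    and "finite S" "\<And>x. x \<in> S \<Longrightarrow> J (f x) = J (g x)"
  shows "J (sum f S) = J (sum g S)"
  using assms(2,3)
proof (induction S rule: finite_induct)
  case (insert x S)
  have "J (f x + sum f S) = J (g x + sum f S)"
    using insert.prems by (intro add) simp
  also have "\<dots> = J (sum f S + g x)"
    by (simp add: add.commute)
  also have "\<dots> = J (sum g S + g x)"
    using insert.prems by (intro add insert.IH) simp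
  finally show ?case
    using insert.hyps by (simp add: add.commute)
qed simp

text \<open>The count is a sum of products of the cardinalities of the fibres of g on the A_i.\<close>

lemma card_listset_filter_map_cong:
  fixes J :: "nat \<Rightarrow> nat"
  assumes add: "\<And>a a' b. J a = J a' \<Longrightarrow> J (a + b) = J (a' + b)"
    and mult: "\<And>a a' b. J a = J a' \<Longrightarrow> J (a * b) = J (a' * b)"
    and "list_all2 (\<lambda>A B. finite A \<and> finite B \<and>
           (\<forall>y. J (card {a\<in>A. g a = y}) = J (card {b\<in>B. g b = y}))) As Bs"
  shows "J (card {rs\<in>listset As. P (map g rs)}) = J (card {rs\<in>listset Bs. P (map g rs)})"
  using assms(3)
proof (induction As Bs arbitrary: P rule: list_all2_induct)
  case (Cons A As B Bs)
  let ?X = "g ` A \<union> g ` B"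
  define NA where "NA y = card {l\<in>listset As. P (y # map g l)}" for y
  define NB where "NB y = card {l\<in>listset Bs. P (y # map g l)}" for y
  have fin: "finite A" "finite B" "\<forall>A\<in>set As. finite A" "\<forall>B\<in>set Bs. finite B"
    using Cons.hyps(1,2) by (auto simp: list_all2_conv_all_nth in_set_conv_nth)
  have "card {rs\<in>listset (A # As). P (map g rs)} = (\<Sum>a\<in>A. NA (g a))"
    unfolding NA_def using card_listset_Cons_filter[OF fin(1,3), of "\<lambda>rs. P (map g rs)"] by simp
  also have "\<dots> = (\<Sum>y\<in>?X. card {a\<in>A. g a = y} * NA y)"
    using fin by (subst sum_comp_natmul_card_fibres) auto
  finally have A: "card {rs\<in>listset (A # As). P (map g rs)} = (\<Sum>y\<in>?X. card {a\<in>A. g a = y} * NA y)" .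
  have "card {rs\<in>listset (B # Bs). P (map g rs)} = (\<Sum>b\<in>B. NB (g b))"
    unfolding NB_def using card_listset_Cons_filter[OF fin(2,4), of "\<lambda>rs. P (map g rs)"] by simp
  also have "\<dots> = (\<Sum>y\<in>?X. card {b\<in>B. g b = y} * NB y)"
    using fin by (subst sum_comp_natmul_card_fibres) auto
  finally have B: "card {rs\<in>listset (B # Bs). P (map g rs)} = (\<Sum>y\<in>?X. card {b\<in>B. g b = y} * NB y)" .
  have "J (card {a\<in>A. g a = y} * NA y) = J (card {b\<in>B. g b = y} * NB y)" for y
  proof -
    have "J (card {a\<in>A. g a = y} * NA y) = J (card {b\<in>B. g b = y} * NA y)"
      using Cons.hyps(1) by (intro mult) simp
    also have "\<dots> = J (card {b\<in>B. g b = y} * NB y)"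
      using mult[OF Cons.IH[of "\<lambda>ys. P (y # ys)"]] unfolding NA_def NB_def by (simp add: mult.commute)
    finally show ?thesis .
  qed
  then show ?case
    unfolding A B using fin by (intro congruence_sum_cong[where J = J, OF add]) auto
qed simp

section \<open>Runs on trees\<close>

lemma in_set_zip_upt: "(i, t) \<in> set (zip [0..<length ts] ts) \<longleftrightarrow> i < length ts \<and> t = ts ! i"
  by (auto simp: set_zip intro!: exI[of _ i])

lemma map_zip_upt:
  "map (\<lambda>(i, t). h i t) (zip [0..<length ts] ts) = map (\<lambda>i. h i (ts ! i)) [0..<length ts]"
  by (rule nth_equalityI) auto

lemma Nil_in_pos: "[] \<in> pos t"
  by (cases t) simp

lemma Cons_in_pos_Node: "i # v \<in> pos (Node f ts) \<longleftrightarrow> i < length ts \<and> v \<in> pos (ts ! i)"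
  by (auto simp: in_set_zip_upt intro!: bexI[of _ "(i, ts ! i)"])

lemma finite_pos: "finite (pos t)"
  by (induction t) (auto simp: in_set_zip_upt)

declare pos.simps [simp del]
declare Nil_in_pos [simp] Cons_in_pos_Node [simp]

lemma ball_pos_Node:
  "(\<forall>w\<in>pos (Node f ts). P w) \<longleftrightarrow> P [] \<and> (\<forall>i<length ts. \<forall>v\<in>pos (ts ! i). P (i # v))"
proof
  assume "\<forall>w\<in>pos (Node f ts). P w"
  then show "P [] \<and> (\<forall>i<length ts. \<forall>v\<in>pos (ts ! i). P (i # v))"
    by simp
next
  assume *: "P [] \<and> (\<forall>i<length ts. \<forall>v\<in>pos (ts ! i). P (i # v))"
  show "\<forall>w\<in>pos (Node f ts). P w"
  proof
    fix w assume "w \<in> pos (Node f ts)"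
    with * show "P w"
      by (cases w) simp_all
  qed
qed

fun subtree :: "'f tree \<Rightarrow> nat list \<Rightarrow> 'f tree" where
  "subtree t [] = t"
| "subtree (Node f ts) (i # w) = subtree (ts ! i) w"

lemma wf_tree_subtree: "wf_tree Sig rk t \<Longrightarrow> w \<in> pos t \<Longrightarrow> wf_tree Sig rk (subtree t w)"
proof (induction t arbitrary: w)
  case (Node f ts)
  then show ?case
    by (cases w) auto
qed

lemma wt_Node:
  "wt \<delta> \<rho> (Node f ts) = prod_list (map (\<lambda>i. wt \<delta> (\<lambda>w. \<rho> (i # w)) (ts ! i)) [0..<length ts])
     * \<delta> (map (\<lambda>i. \<rho> [i]) [0..<length ts]) f (\<rho> [])"
  by (simp only: wt.simps map_zip_upt[where h = "\<lambda>i t. wt \<delta> (\<lambda>w. \<rho> (i # w)) t"])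

lemma wt_cong: "(\<And>w. w \<in> pos t \<Longrightarrow> \<rho> w = \<rho>' w) \<Longrightarrow> wt \<delta> \<rho> t = wt \<delta> \<rho>' t"
proof (induction t arbitrary: \<rho> \<rho>')
  case (Node f ts)
  have children: "map (\<lambda>i. wt \<delta> (\<lambda>w. \<rho> (i # w)) (ts ! i)) [0..<length ts]
      = map (\<lambda>i. wt \<delta> (\<lambda>w. \<rho>' (i # w)) (ts ! i)) [0..<length ts]"
    using Node.prems by (auto simp: map_eq_conv intro: Node.IH)
  have states: "map (\<lambda>i. \<rho> [i]) [0..<length ts] = map (\<lambda>i. \<rho>' [i]) [0..<length ts]"
    "\<rho> [] = \<rho>' []"
    using Node.prems by (simp_all add: map_eq_conv)
  show ?case
    unfolding wt_Node children states ..
qed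

lemma prod_list_all_one: "\<forall>x\<in>set xs. x = 1 \<Longrightarrow> prod_list xs = (1::'a::monoid_mult)"
  by (induction xs) auto

lemma prod_list_zero_mem: "(0::'a::{monoid_mult,mult_zero}) \<in> set xs \<Longrightarrow> prod_list xs = 0"
  by (induction xs) auto

lemma prod_list_mult_in_Hset:
  "\<forall>x\<in>set xs. x \<in> Hset Sig rk Q \<delta> \<Longrightarrow> d \<in> Hset Sig rk Q \<delta> \<Longrightarrow> prod_list xs * d \<in> Hset Sig rk Q \<delta>"
  by (induction xs) (auto simp: mult.assoc intro: Hset.mult)

lemma wt_in_Hset: "wf_tree Sig rk t \<Longrightarrow> \<forall>w\<in>pos t. \<rho> w \<in> Q \<Longrightarrow> wt \<delta> \<rho> t \<in> Hset Sig rk Q \<delta>"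
proof (induction t arbitrary: \<rho>)
  case (Node f ts)
  have "f \<in> Sig" "length ts = rk f" "\<rho> [] \<in> Q" "set (map (\<lambda>i. \<rho> [i]) [0..<length ts]) \<subseteq> Q"
    using Node.prems by auto
  then have "\<delta> (map (\<lambda>i. \<rho> [i]) [0..<length ts]) f (\<rho> []) \<in> delta_image Sig rk Q \<delta>"
    unfolding delta_image_def by (intro CollectI exI conjI) (rule refl, simp_all)
  moreover have "wt \<delta> (\<lambda>w. \<rho> (i # w)) (ts ! i) \<in> Hset Sig rk Q \<delta>" if "i < length ts" for i
    using that Node.prems unfolding ball_pos_Node by (intro Node.IH) auto
  ultimately show ?case
    unfolding wt_Node by (intro prod_list_mult_in_Hset Hset.base) auto
qed

lemma runs_mem: "\<rho> \<in> runs Q t \<Longrightarrow> w \<in> pos t \<Longrightarrow> \<rho> w \<in> Q"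
  unfolding runs_def by auto

lemma finite_runs: "finite Q \<Longrightarrow> finite (runs Q t)"
  unfolding runs_def by (intro finite_PiE finite_pos)

lemma root_state_wt_mem:
  assumes "t \<in> trees Sig rk" "\<rho> \<in> runs Q t"
  shows "(\<rho> [], wt \<delta> \<rho> t) \<in> Q \<times> Hset Sig rk Q \<delta>"
proof -
  have "\<forall>w\<in>pos t. \<rho> w \<in> Q"
    using assms(2) runs_mem by blast
  then show ?thesis
    using assms(1) wt_in_Hset unfolding trees_def by auto
qed

lemma pcount_eq_0:
  assumes "t \<in> trees Sig rk" "x \<notin> Q \<times> Hset Sig rk Q \<delta>"
  shows "pcount Q \<delta> t x = 0"
proof -
  have "{\<rho> \<in> qruns Q (fst x) t. wt \<delta> \<rho> t = snd x} = {}"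
    using assms root_state_wt_mem[OF assms(1)] unfolding qruns_def by (cases x) auto
  then show ?thesis
    unfolding pcount_def by (simp only: card.empty)
qed

lemma pcount_eq_card_runs: "pcount Q \<delta> \<xi> x = card {\<rho> \<in> runs Q \<xi>. (\<rho> [], wt \<delta> \<rho> \<xi>) = x}"
  unfolding pcount_def qruns_def by (cases x) (simp add: conj_assoc)

section \<open>Decomposing a run at the root\<close>

text \<open>Each child run is paired with its subtree, so that the single map root_weight \<delta> yields
  the root state and weight of every child run.\<close>

definition child_runs :: "'q set \<Rightarrow> 'f tree list \<Rightarrow> ('f tree \<times> (nat list \<Rightarrow> 'q)) set list" where
  "child_runs Q ts = map (\<lambda>t. Pair t ` runs Q t) ts"

definition split_run :: "'f tree list \<Rightarrow> (nat list \<Rightarrow> 'q) \<Rightarrow> ('f tree \<times> (nat list \<Rightarrow> 'q)) list" where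
  "split_run ts \<rho> = map (\<lambda>i. (ts ! i, restrict (\<lambda>v. \<rho> (i # v)) (pos (ts ! i)))) [0..<length ts]"

definition join_run :: "'f tree list \<Rightarrow> 'q \<Rightarrow> ('f tree \<times> (nat list \<Rightarrow> 'q)) list \<Rightarrow> nat list \<Rightarrow> 'q" where
  "join_run ts q rs = (\<lambda>w. case w of
      [] \<Rightarrow> q
    | i # v \<Rightarrow> if i < length ts \<and> v \<in> pos (ts ! i) then snd (rs ! i) v else undefined)"

definition root_weight :: "('q list \<Rightarrow> 'f \<Rightarrow> 'q \<Rightarrow> 'b::monoid_mult) \<Rightarrow> 'f tree \<times> (nat list \<Rightarrow> 'q) \<Rightarrow> 'q \<times> 'b" where
  "root_weight \<delta> = (\<lambda>(t, \<rho>). (\<rho> [], wt \<delta> \<rho> t))"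

definition node_weight :: "('q list \<Rightarrow> 'f \<Rightarrow> 'q \<Rightarrow> 'b::monoid_mult) \<Rightarrow> 'f \<Rightarrow> 'q \<Rightarrow> ('q \<times> 'b) list \<Rightarrow> 'b" where
  "node_weight \<delta> f q ys = prod_list (map snd ys) * \<delta> (map fst ys) f q"

lemma mem_Pair_image_iff: "x \<in> Pair a ` A \<longleftrightarrow> fst x = a \<and> snd x \<in> A"
  by (cases x) auto

lemma mem_listset_child_runs:
  "rs \<in> listset (child_runs Q ts) \<longleftrightarrow>
     length rs = length ts \<and> (\<forall>i<length ts. fst (rs ! i) = ts ! i \<and> snd (rs ! i) \<in> runs Q (ts ! i))"
  unfolding mem_listset_iff list_all2_conv_all_nth child_runs_def by (auto simp: mem_Pair_image_iff)

lemma card_root_weight_fibre: "card {a \<in> Pair t ` runs Q t. root_weight \<delta> a = x} = pcount Q \<delta> t x"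
proof -
  have "{a \<in> Pair t ` runs Q t. root_weight \<delta> a = x} = Pair t ` {\<rho> \<in> qruns Q (fst x) t. wt \<delta> \<rho> t = snd x}"
    by (cases x) (auto simp: root_weight_def qruns_def)
  then show ?thesis
    unfolding pcount_def by (simp add: card_image inj_on_def)
qed

lemma split_run_in_listset:
  "\<rho> \<in> runs Q (Node f ts) \<Longrightarrow> split_run ts \<rho> \<in> listset (child_runs Q ts)"
  unfolding mem_listset_child_runs split_run_def by (auto simp: runs_def)

lemma node_weight_split_run:
  "node_weight \<delta> f (\<rho> []) (map (root_weight \<delta>) (split_run ts \<rho>)) = wt \<delta> \<rho> (Node f ts)"
proof -
  have "map (root_weight \<delta>) (split_run ts \<rho>) = map (\<lambda>i. (\<rho> [i], wt \<delta> (\<lambda>w. \<rho> (i # w)) (ts ! i))) [0..<length ts]"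
    unfolding split_run_def root_weight_def by (auto intro: wt_cong)
  then show ?thesis
    unfolding node_weight_def wt_Node by (simp add: comp_def)
qed

lemma join_split_run: "\<rho> \<in> runs Q (Node f ts) \<Longrightarrow> join_run ts (\<rho> []) (split_run ts \<rho>) = \<rho>"
  unfolding join_run_def split_run_def runs_def
  by (rule ext, auto split: list.split simp: PiE_def extensional_def)

lemma join_run_Nil [simp]: "join_run ts q rs [] = q"
  by (simp add: join_run_def)

lemma join_run_in_runs:
  assumes "rs \<in> listset (child_runs Q ts)" "q \<in> Q"
  shows "join_run ts q rs \<in> runs Q (Node f ts)"
  unfolding runs_def PiE_iff extensional_def
proof (intro conjI ballI CollectI allI impI)
  fix w assume "w \<in> pos (Node f ts)"
  then show "join_run ts q rs w \<in> Q"
    using assms by (cases w) (auto simp: join_run_def mem_listset_child_runs intro: runs_mem)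
next
  fix w assume "w \<notin> pos (Node f ts)"
  then show "join_run ts q rs w = undefined"
    by (cases w) (auto simp: join_run_def)
qed

lemma split_join_run:
  assumes "rs \<in> listset (child_runs Q ts)"
  shows "split_run ts (join_run ts q rs) = rs"
proof (rule nth_equalityI)
  fix i assume "i < length (split_run ts (join_run ts q rs))"
  then have "i < length ts"
    by (simp add: split_run_def)
  moreover have "snd (rs ! i) \<in> extensional (pos (ts ! i))" if "i < length ts"
    using assms that unfolding mem_listset_child_runs runs_def by (auto simp: PiE_iff)
  ultimately show "split_run ts (join_run ts q rs) ! i = rs ! i"
    using assms unfolding mem_listset_child_runs split_run_def join_run_def
    by (auto intro!: prod_eqI extensionalityI[of _ "pos (ts ! i)"])
qed (use assms in \<open>simp add: split_run_def mem_listset_child_runs\<close>)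

lemma pcount_Node:
  assumes "q \<in> Q"
  shows "pcount Q \<delta> (Node f ts) (q, b) =
    card {rs \<in> listset (child_runs Q ts). node_weight \<delta> f q (map (root_weight \<delta>) rs) = b}"
proof -
  let ?S = "{\<rho> \<in> qruns Q q (Node f ts). wt \<delta> \<rho> (Node f ts) = b}"
  let ?T = "{rs \<in> listset (child_runs Q ts). node_weight \<delta> f q (map (root_weight \<delta>) rs) = b}"
  have "bij_betw (split_run ts) ?S ?T"
  proof (rule bij_betw_byWitness[where f' = "join_run ts q"])
    show "\<forall>\<rho>\<in>?S. join_run ts q (split_run ts \<rho>) = \<rho>"
      using join_split_run by (auto simp: qruns_def)
    show "\<forall>rs\<in>?T. split_run ts (join_run ts q rs) = rs"
      by (auto intro: split_join_run)
    show "split_run ts ` ?S \<subseteq> ?T"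
      using split_run_in_listset node_weight_split_run by (force simp: qruns_def)
    show "join_run ts q ` ?T \<subseteq> ?S"
    proof
      fix \<rho> assume "\<rho> \<in> join_run ts q ` ?T"
      then obtain rs where rs: "rs \<in> listset (child_runs Q ts)"
        "node_weight \<delta> f q (map (root_weight \<delta>) rs) = b" "\<rho> = join_run ts q rs"
        by blast
      then have "wt \<delta> \<rho> (Node f ts) = b"
        using node_weight_split_run[of \<delta> f \<rho> ts] split_join_run[OF rs(1)] by simp
      then show "\<rho> \<in> ?S"
        using join_run_in_runs[OF rs(1) assms] rs(3) by (simp add: qruns_def)
    qed
  qed
  then show ?thesis
    unfolding pcount_def by (simp add: bij_betw_same_card)
qed

section \<open>The automaton R(A)\<close>

context
  fixes Sig :: "'f set" and rk :: "'f \<Rightarrow> nat" and Q :: "'q set"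
    and \<delta> :: "'q list \<Rightarrow> 'f \<Rightarrow> 'q \<Rightarrow> 'b::strong_bimonoid" and F :: "'q \<Rightarrow> 'b"
  assumes wta: "wta Q"
    and fop: "finite_order_property Sig rk Q \<delta> F"
begin

abbreviation "H \<equiv> Hset Sig rk Q \<delta>"
abbreviation "J \<equiv> JA Sig rk Q \<delta> F"
abbreviation "\<pi> \<equiv> piA Sig rk Q \<delta> F"

lemma finite_states: "finite Q"
  using wta unfolding wta_def by simp

lemma finite_H: "finite H"
  using fop unfolding finite_order_property_def by simp

lemma finite_HF: "finite (HF Sig rk Q \<delta> F)"
proof -
  have "HF Sig rk Q \<delta> F = (\<lambda>(a, c). a * c) ` (H \<times> F ` Q)"
    unfolding HF_def by auto
  then show ?thesis
    using finite_H finite_states by simp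
qed

lemma pA_pos: "0 < pA Sig rk Q \<delta> F"
proof -
  have "0 \<notin> ord_period ` HF Sig rk Q \<delta> F"
    using ord_period_spec(1) fop unfolding finite_order_property_def by fastforce
  then have "Lcm (ord_period ` HF Sig rk Q \<delta> F) \<noteq> 0"
    using finite_HF by (simp add: Lcm_0_iff)
  then show ?thesis
    unfolding pA_def by simp
qed

lemma natmul_JA: "c \<in> HF Sig rk Q \<delta> F \<Longrightarrow> natmul (J n) c = natmul n c"
  unfolding JA_eq_cyc_reduce
proof (rule natmul_cyc_reduce)
  assume c: "c \<in> HF Sig rk Q \<delta> F"
  then show "finite_order c"
    using fop unfolding finite_order_property_def by blast
  show "ord_index c \<le> iA Sig rk Q \<delta> F"
    unfolding iA_def using finite_HF c by (intro Max_ge) auto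
  show "ord_period c dvd pA Sig rk Q \<delta> F"
    unfolding pA_def using c by (intro dvd_Lcm) auto
qed

lemma JA_add_cong: "J a = J a' \<Longrightarrow> J (a + b) = J (a' + b)"
  unfolding JA_eq_cyc_reduce by (rule cyc_reduce_add_cong)

lemma JA_mult_cong: "J a = J a' \<Longrightarrow> J (a * b) = J (a' * b)"
  unfolding JA_eq_cyc_reduce by (rule cyc_reduce_mult_cong)

lemma JA_pcount_eq:
  assumes "t \<in> trees Sig rk" "t' \<in> trees Sig rk" "\<pi> t = \<pi> t'"
  shows "J (pcount Q \<delta> t y) = J (pcount Q \<delta> t' y)"
proof (cases "y \<in> Q \<times> H")
  case True
  then show ?thesis
    using fun_cong[OF assms(3), of y] unfolding piA_def by simp
next
  case False
  then show ?thesis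
    using pcount_eq_0[OF assms(1) False] pcount_eq_0[OF assms(2) False] by simp
qed

lemma piA_Node_cong:
  assumes "set ts \<subseteq> trees Sig rk" "set ts' \<subseteq> trees Sig rk" "map \<pi> ts = map \<pi> ts'"
  shows "\<pi> (Node f ts) = \<pi> (Node f ts')"
proof
  fix x :: "'q \<times> 'b"
  obtain q b where x: "x = (q, b)"
    by (cases x)
  have fibres: "list_all2 (\<lambda>A B. finite A \<and> finite B \<and>
      (\<forall>y. J (card {a\<in>A. root_weight \<delta> a = y}) = J (card {b\<in>B. root_weight \<delta> b = y})))
      (child_runs Q ts) (child_runs Q ts')"
    unfolding child_runs_def list_all2_map1 list_all2_map2 card_root_weight_fibre
  proof (rule list_all2_all_nthI)
    show len: "length ts = length ts'"
      using assms(3) by (rule map_eq_imp_length_eq)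
    fix i assume i: "i < length ts"
    have trees: "ts ! i \<in> trees Sig rk" "ts' ! i \<in> trees Sig rk"
      using assms(1,2) i len by (simp_all add: subset_iff)
    have "\<pi> (ts ! i) = \<pi> (ts' ! i)"
      using assms(3) i len nth_map by metis
    then show "finite (Pair (ts ! i) ` runs Q (ts ! i)) \<and> finite (Pair (ts' ! i) ` runs Q (ts' ! i)) \<and>
        (\<forall>y. J (pcount Q \<delta> (ts ! i) y) = J (pcount Q \<delta> (ts' ! i) y))"
      using finite_runs[OF finite_states] JA_pcount_eq[OF trees] by (auto intro: finite_imageI)
  qed
  have "J (card {rs \<in> listset (child_runs Q ts). node_weight \<delta> f q (map (root_weight \<delta>) rs) = b})
      = J (card {rs \<in> listset (child_runs Q ts'). node_weight \<delta> f q (map (root_weight \<delta>) rs) = b})"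
    using card_listset_filter_map_cong[where J = J and g = "root_weight \<delta>"
        and P = "\<lambda>ys. node_weight \<delta> f q ys = b", OF JA_add_cong JA_mult_cong fibres] .
  then show "\<pi> (Node f ts) x = \<pi> (Node f ts') x"
    unfolding piA_def x by (simp add: pcount_Node)
qed

lemma deltaR_map_piA:
  assumes "set ts \<subseteq> trees Sig rk"
  shows "deltaR Sig rk Q \<delta> F (map \<pi> ts) f p = (if p = \<pi> (Node f ts) then 1 else 0)"
proof -
  define ts' where "ts' = map (\<lambda>p'. SOME \<xi>. \<xi> \<in> trees Sig rk \<and> \<pi> \<xi> = p') (map \<pi> ts)"
  have "ts' ! i \<in> trees Sig rk \<and> \<pi> (ts' ! i) = \<pi> (ts ! i)" if "i < length ts" for i
  proof -
    have "ts' ! i = (SOME \<xi>. \<xi> \<in> trees Sig rk \<and> \<pi> \<xi> = \<pi> (ts ! i))"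
      unfolding ts'_def using that by simp
    moreover have "ts ! i \<in> trees Sig rk"
      using that assms by auto
    ultimately show ?thesis
      by (metis (mono_tags, lifting) someI)
  qed
  then have "set ts' \<subseteq> trees Sig rk" "map \<pi> ts' = map \<pi> ts"
    by (auto simp: ts'_def in_set_conv_nth intro: nth_equalityI)
  then have "\<pi> (Node f ts') = \<pi> (Node f ts)"
    using assms by (intro piA_Node_cong)
  then show ?thesis
    unfolding deltaR_def ts'_def[symmetric] by simp
qed

lemma wt_deltaR:
  "wf_tree Sig rk \<xi> \<Longrightarrow>
     wt (deltaR Sig rk Q \<delta> F) \<rho> \<xi> = (if \<forall>w\<in>pos \<xi>. \<rho> w = \<pi> (subtree \<xi> w) then 1 else 0)"
proof (induction \<xi> arbitrary: \<rho>)
  case (Node f ts)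
  define good where "good i \<longleftrightarrow> (\<forall>w\<in>pos (ts ! i). \<rho> (i # w) = \<pi> (subtree (ts ! i) w))" for i
  have children: "wt (deltaR Sig rk Q \<delta> F) (\<lambda>w. \<rho> (i # w)) (ts ! i) = (if good i then 1 else 0)"
    if "i < length ts" for i
    unfolding good_def using Node that by simp
  have run_iff: "(\<forall>w\<in>pos (Node f ts). \<rho> w = \<pi> (subtree (Node f ts) w)) \<longleftrightarrow>
      \<rho> [] = \<pi> (Node f ts) \<and> (\<forall>i<length ts. good i)"
    unfolding ball_pos_Node good_def by simp
  show ?case
  proof (cases "\<forall>i<length ts. good i")
    case True
    then have "prod_list (map (\<lambda>i. wt (deltaR Sig rk Q \<delta> F) (\<lambda>w. \<rho> (i # w)) (ts ! i)) [0..<length ts]) = 1"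
      using children by (intro prod_list_all_one) auto
    moreover have "map (\<lambda>i. \<rho> [i]) [0..<length ts] = map \<pi> ts"
      using True unfolding good_def by (auto intro: nth_equalityI)
    moreover have "set ts \<subseteq> trees Sig rk"
      using Node.prems by (auto simp: trees_def)
    ultimately show ?thesis
      unfolding wt_Node run_iff using True by (simp add: deltaR_map_piA)
  next
    case False
    then obtain j where j: "j < length ts" "\<not> good j"
      by blast
    then have "0 \<in> set (map (\<lambda>i. wt (deltaR Sig rk Q \<delta> F) (\<lambda>w. \<rho> (i # w)) (ts ! i)) [0..<length ts])"
      using children by (force simp: image_iff)
    then show ?thesis
      unfolding wt_Node run_iff using False by (simp add: prod_list_zero_mem)
  qed
qed

lemma finite_QR: "finite (QR Sig rk Q \<delta> F)"
proof -
  let ?N = "iA Sig rk Q \<delta> F + pA Sig rk Q \<delta> F"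
  have "QR Sig rk Q \<delta> F \<subseteq> {g. \<forall>x. (x \<in> Q \<times> H \<longrightarrow> g x \<in> {..<?N}) \<and> (x \<notin> Q \<times> H \<longrightarrow> g x = 0)}"
  proof
    fix g assume "g \<in> QR Sig rk Q \<delta> F"
    then obtain \<xi> where g: "g = \<pi> \<xi>"
      unfolding QR_def by blast
    have "\<pi> \<xi> x < ?N" for x
      unfolding piA_def JA_eq_cyc_reduce using cyc_reduce_less[OF pA_pos] pA_pos by simp
    moreover have "x \<notin> Q \<times> H \<Longrightarrow> \<pi> \<xi> x = 0" for x
      unfolding piA_def by simp
    ultimately show "g \<in> {g. \<forall>x. (x \<in> Q \<times> H \<longrightarrow> g x \<in> {..<?N}) \<and> (x \<notin> Q \<times> H \<longrightarrow> g x = 0)}"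
      unfolding g by simp
  qed
  moreover have "finite {g. \<forall>x. (x \<in> Q \<times> H \<longrightarrow> g x \<in> {..<?N}) \<and> (x \<notin> Q \<times> H \<longrightarrow> g x = 0)}"
    using finite_states finite_H by (intro finite_set_of_finite_funs) auto
  ultimately show ?thesis
    by (rule finite_subset)
qed

lemma run_sem_eq_FR:
  assumes "\<xi> \<in> trees Sig rk"
  shows "run_sem Q \<delta> F \<xi> = FR Sig rk Q \<delta> F (\<pi> \<xi>)"
proof -
  let ?g = "\<lambda>\<rho>. (\<rho> [], wt \<delta> \<rho> \<xi>)"
  let ?h = "\<lambda>(q, b). b * F q"
  have "run_sem Q \<delta> F \<xi> = (\<Sum>\<rho>\<in>runs Q \<xi>. ?h (?g \<rho>))"
    unfolding run_sem_def by simp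
  also have "\<dots> = (\<Sum>x\<in>Q \<times> H. natmul (pcount Q \<delta> \<xi> x) (?h x))"
    unfolding pcount_eq_card_runs
  proof (rule sum_comp_natmul_card_fibres[where g = ?g and h = ?h])
    show "finite (runs Q \<xi>)" "finite (Q \<times> H)"
      using finite_runs finite_states finite_H by simp_all
    show "?g ` runs Q \<xi> \<subseteq> Q \<times> H"
      using root_state_wt_mem[OF assms] by blast
  qed
  also have "\<dots> = (\<Sum>x\<in>Q \<times> H. natmul (\<pi> \<xi> x) (?h x))"
  proof (rule sum.cong)
    fix x assume "x \<in> Q \<times> H"
    then obtain q b where qb: "x = (q, b)" "q \<in> Q" "b \<in> H"
      by blast
    then have "b * F q \<in> HF Sig rk Q \<delta> F"
      unfolding HF_def by blast
    then show "natmul (pcount Q \<delta> \<xi> x) (?h x) = natmul (\<pi> \<xi> x) (?h x)"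
      unfolding piA_def qb using qb by (simp add: natmul_JA)
  qed simp
  also have "\<dots> = FR Sig rk Q \<delta> F (\<pi> \<xi>)"
    unfolding FR_def by (intro sum.cong) auto
  finally show ?thesis .
qed

lemma run_sem_R_eq_FR:
  assumes "\<xi> \<in> trees Sig rk"
  shows "run_sem (QR Sig rk Q \<delta> F) (deltaR Sig rk Q \<delta> F) (FR Sig rk Q \<delta> F) \<xi> = FR Sig rk Q \<delta> F (\<pi> \<xi>)"
proof -
  let ?R = "runs (QR Sig rk Q \<delta> F) \<xi>"
  define \<rho>\<^sub>0 where "\<rho>\<^sub>0 = restrict (\<lambda>w. \<pi> (subtree \<xi> w)) (pos \<xi>)"
  have wf_\<xi>: "wf_tree Sig rk \<xi>"
    using assms unfolding trees_def by simp
  have "\<rho>\<^sub>0 \<in> ?R"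
    using wf_tree_subtree[OF wf_\<xi>] unfolding runs_def \<rho>\<^sub>0_def QR_def trees_def by auto
  have "wt (deltaR Sig rk Q \<delta> F) \<rho> \<xi> = (if \<rho> = \<rho>\<^sub>0 then 1 else 0)" if "\<rho> \<in> ?R" for \<rho>
  proof -
    have "(\<forall>w\<in>pos \<xi>. \<rho> w = \<pi> (subtree \<xi> w)) \<longleftrightarrow> \<rho> = \<rho>\<^sub>0"
      using that unfolding \<rho>\<^sub>0_def runs_def by (auto simp: PiE_iff intro: extensionalityI[of _ "pos \<xi>"])
    then show ?thesis
      unfolding wt_deltaR[OF wf_\<xi>] by simp
  qed
  then have "run_sem (QR Sig rk Q \<delta> F) (deltaR Sig rk Q \<delta> F) (FR Sig rk Q \<delta> F) \<xi>
      = (\<Sum>\<rho>\<in>?R. if \<rho> = \<rho>\<^sub>0 then FR Sig rk Q \<delta> F (\<rho>\<^sub>0 []) else 0)"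
    unfolding run_sem_def by (intro sum.cong) auto
  also have "\<dots> = FR Sig rk Q \<delta> F (\<rho>\<^sub>0 [])"
    using \<open>\<rho>\<^sub>0 \<in> ?R\<close> by (simp add: sum.delta[OF finite_runs[OF finite_QR]])
  finally show ?thesis
    unfolding \<rho>\<^sub>0_def by simp
qed

end

theorem theorem7p3:
  fixes Sig :: "'f set" and rk :: "'f \<Rightarrow> nat" and Q :: "'q set"
    and \<delta> :: "'q list \<Rightarrow> 'f \<Rightarrow> 'q \<Rightarrow> 'b::strong_bimonoid" and F :: "'q \<Rightarrow> 'b"
  assumes "ranked_alphabet Sig rk"
    and "wta Q"
    and "finite_order_property Sig rk Q \<delta> F"
  shows "\<forall>\<xi>\<in>trees Sig rk.
           run_sem (QR Sig rk Q \<delta> F) (deltaR Sig rk Q \<delta> F) (FR Sig rk Q \<delta> F) \<xi> = run_sem Q \<delta> F \<xi>"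
  \<comment> \<open>The alphabet hypothesis only makes Q_R nonempty; the identity does not need it.\<close>
  using run_sem_eq_FR[OF assms(2,3)] run_sem_R_eq_FR[OF assms(2,3)] by simp

end
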